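(* Let $q\in\mathbb{C}$ with $0<|q|<1$ and $l,m,n,u\in\mathbb{N}$. Then \[ \sum_{k=0}^{n}\frac{q^{k^2+uk} (q)_{l+m+n-k}} {(q)_k (q)_{l-k}(q)_{m-k}(q)_{n-k} (q)_{u+k}} =\sum_{k=-n}^{n}\frac{(-1)^k q^{(3k^2-k)/2} (q)_{l+m}(q)_{m+n}(q)_{l+n}(q)_u} {(q)_{l-k}(q)_{m-k}(q)_{n-k}(q)_{u-k}(q)_{l+k}(q)_{m+k}(q)_{n+k}(q)_{u+k}}, \] and \[ \sum_{k=0}^{n}\frac{q^{k^2+(u+1)k} (q)_{l+m+n-k+1}} {(q)_k (q)_{l-k}(q)_{m-k}(q)_{n-k}(q)_{u+k+1}} =\sum_{k=-n-1}^{n}\frac{(-1)^k q^{(3k^2+k)/2} (q)_{l+m+1}(q)_{m+n+1}(q)_{l+n+1}(q)_u} {(q)_{l-k}(q)_{m-k}(q)_{n-k}(q)_{u-k}(q)_{l+k+1}(q)_{m+k+1}(q)_{n+k+1}(q)_{u+k+1}}. \]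
   Context: $(q)_n=(q;q)_n=(1-q)(1-q^2)\cdots(1-q^n)$ for $n\ge0$ (with $(q)_0=1$), and $1/(q)_n=0$ for $n<0$. *)

theory Defs
  imports "HOL-Analysis.Analysis"
begin

definition qpoch :: "complex \<Rightarrow> nat \<Rightarrow> complex" where
  "qpoch q n = (\<Prod>i=1..n. 1 - q ^ i)"

definition qinv :: "complex \<Rightarrow> int \<Rightarrow> complex" where
  "qinv q n = (if n < 0 then 0 else 1 / qpoch q (nat n))"

end

theory Submission
  imports Defs
begin

(* Both sides are rewritten as the same single sum over an auxiliary index s.
   On the left, the q-Chu-Vandermonde identity expands (q)_{l+m+n-k+e} / ((q)_{l-k} (q)_{m-k})
   as a sum over s; after exchanging the summations, the sum over k is again a
   q-Chu-Vandermonde sum.  On the right, the same identity expands the factors that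
   involve l and m as a sum over s, and what remains inside is a terminating q-Dixon
   sum in n, s, u.  The q-Dixon sum is proved by the WZ method (induction on one of its
   parameters), applied to the summand symmetrised under k to -e-k.  A parity parameter
   e in {0, 1} treats the two identities of the theorem simultaneously. *)

lemma sum_int_reflect: "(\<Sum>k\<in>{a..b::int}. f (a + b - k)) = (\<Sum>k\<in>{a..b}. f k)"
  by (rule sum.reindex_bij_witness[of _ "\<lambda>k. a + b - k" "\<lambda>k. a + b - k"]) auto

lemma sum_int_telescope:
  fixes G :: "int \<Rightarrow> 'a::ab_group_add"
  assumes "lo \<le> hi + 1"
  shows "(\<Sum>k\<in>{lo..hi}. G (k + 1) - G k) = G (hi + 1) - G lo"
proof -
  have "lo - 1 \<le> hi"
    using assms by simp
  then show ?thesis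
  proof (induction hi rule: int_ge_induct)
    case (step i)
    then have "{lo..i + 1} = insert (i + 1) {lo..i}"
      by auto
    then show ?case
      using step by simp
  qed simp
qed

lemma wz_sum_induct:
  fixes f :: "int \<Rightarrow> int \<Rightarrow> 'a::field"
  assumes recurrence: "\<And>a k. 0 \<le> a \<Longrightarrow> a < M \<Longrightarrow>
      D a * f (a + 1) k = N a * f a k + (G a (k + 1) - G a k)"
    and boundary: "\<And>a. 0 \<le> a \<Longrightarrow> a < M \<Longrightarrow> G a lo = 0 \<and> G a (hi + 1) = 0"
    and closed_form: "\<And>a. 0 \<le> a \<Longrightarrow> a < M \<Longrightarrow> D a * Z (a + 1) = N a * Z a \<and> D a \<noteq> 0"
    and initial: "(\<Sum>k\<in>{lo..hi}. f 0 k) = Z 0"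
    and "lo \<le> hi + 1" "0 \<le> a" "a \<le> M"
  shows "(\<Sum>k\<in>{lo..hi}. f a k) = Z a"
  using \<open>0 \<le> a\<close> \<open>a \<le> M\<close>
proof (induction a rule: int_ge_induct)
  case base
  show ?case by (fact initial)
next
  case (step a)
  then have a: "0 \<le> a" "a < M"
    by simp_all
  have "D a * (\<Sum>k\<in>{lo..hi}. f (a + 1) k)
      = N a * (\<Sum>k\<in>{lo..hi}. f a k) + (\<Sum>k\<in>{lo..hi}. G a (k + 1) - G a k)"
    using recurrence[OF a] by (simp add: sum_distrib_left sum.distrib)
  also have "(\<Sum>k\<in>{lo..hi}. G a (k + 1) - G a k) = 0"
    using sum_int_telescope[OF \<open>lo \<le> hi + 1\<close>, of "G a"] boundary[OF a] by simp
  also have "N a * (\<Sum>k\<in>{lo..hi}. f a k) = D a * Z (a + 1)"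
    using step closed_form[OF a] by simp
  finally have "D a * (\<Sum>k\<in>{lo..hi}. f (a + 1) k) = D a * Z (a + 1)"
    by simp
  then show ?case
    using closed_form[OF a] by (metis mult_left_cancel)
qed

locale q_generic =
  fixes q :: complex
  assumes q_nonzero: "q \<noteq> 0"
    and q_power_neq_one: "0 < n \<Longrightarrow> q ^ n \<noteq> 1"
begin

section \<open>The q-Chu-Vandermonde sum\<close>

definition poch :: "int \<Rightarrow> complex" where
  "poch n = qpoch q (nat n)"

(* As 1/(q)_n vanishes for n < 0, every sum below may be extended or truncated at will,
   as long as its range covers the support of the summand. *)
abbreviation rpoch :: "int \<Rightarrow> complex" where
  "rpoch \<equiv> qinv q"

lemma q_powi_add: "q powi (m + n) = q powi m * q powi n"
  using q_nonzero by (simp add: power_int_add)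

lemma one_minus_q_powi_nonzero: "0 < n \<Longrightarrow> 1 - q powi n \<noteq> 0"
  using q_power_neq_one[of "nat n"] by (simp add: power_int_def)

lemma qpoch_nonzero: "qpoch q n \<noteq> 0"
  using q_power_neq_one by (auto simp: qpoch_def prod_zero_iff)

lemma rpoch_neg: "n < 0 \<Longrightarrow> rpoch n = 0"
  by (simp add: qinv_def)

lemma rpoch_0 [simp]: "rpoch 0 = 1"
  by (simp add: qinv_def qpoch_def)

lemma poch_mult_rpoch: "0 \<le> n \<Longrightarrow> poch n * rpoch n = 1"
  by (simp add: poch_def qinv_def qpoch_nonzero)

lemma poch_succ: "0 \<le> n \<Longrightarrow> poch (n + 1) = poch n * (1 - q powi (n + 1))"
  by (simp add: poch_def qpoch_def nat_add_distrib power_int_def prod.cl_ivl_Suc)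

lemma rpoch_pred: "rpoch (n - 1) = (1 - q powi n) * rpoch n"
proof (cases "0 < n")
  case True
  have "poch n = poch (n - 1) * (1 - q powi n)"
    using poch_succ[of "n - 1"] True by simp
  moreover have "poch (n - 1) \<noteq> 0" "poch n \<noteq> 0"
    by (simp_all add: poch_def qpoch_nonzero)
  ultimately show ?thesis
    using True by (simp add: qinv_def poch_def[symmetric] field_simps)
next
  case False
  then show ?thesis
    by (cases "n = 0") (auto simp: rpoch_neg)
qed

lemma rpoch_succ: "rpoch n = (1 - q powi (n + 1)) * rpoch (n + 1)"
  using rpoch_pred[of "n + 1"] by simp

lemma rpoch_pascal:
  "(1 - q powi (x + y)) * rpoch x * rpoch y
    = rpoch (x - 1) * rpoch y + q powi x * rpoch x * rpoch (y - 1)"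
  unfolding rpoch_pred[of x] rpoch_pred[of y] q_powi_add by (simp add: algebra_simps)

definition chu_term :: "int \<Rightarrow> int \<Rightarrow> int \<Rightarrow> int \<Rightarrow> complex" where
  "chu_term A B c i
    = q powi ((A - i) * (B - i)) * rpoch (A - i) * rpoch (B - i) * rpoch i * rpoch (c + i)"

lemma chu_term_pascal:
  "(1 - q powi (B + 1)) * chu_term A (B + 1) c i
     = chu_term (A - 1) B (c + 1) (i - 1) + q powi A * chu_term A B c i"
proof -
  have exponent: "q powi ((A - i) * (B + 1 - i)) * q powi i = q powi A * q powi ((A - i) * (B - i))"
    unfolding q_powi_add[symmetric] by (simp add: algebra_simps)
  have "(1 - q powi (B + 1)) * chu_term A (B + 1) c i
      = q powi ((A - i) * (B + 1 - i)) * rpoch (A - i) * rpoch (c + i)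
        * ((1 - q powi (i + (B + 1 - i))) * rpoch i * rpoch (B + 1 - i))"
    by (simp add: chu_term_def ac_simps)
  also have "\<dots> = q powi ((A - i) * (B + 1 - i)) * rpoch (A - i) * rpoch (c + i)
        * (rpoch (i - 1) * rpoch (B + 1 - i) + q powi i * rpoch i * rpoch (B + 1 - i - 1))"
    by (simp only: rpoch_pascal)
  also have "\<dots> = chu_term (A - 1) B (c + 1) (i - 1) + q powi A * chu_term A B c i"
    using exponent by (simp add: chu_term_def algebra_simps)
  finally show ?thesis .
qed

lemma chu_sum_rec:
  "(1 - q powi (B + 1)) * (\<Sum>i\<in>{0..B + 1}. chu_term A (B + 1) c i)
     = (\<Sum>i\<in>{0..B}. chu_term (A - 1) B (c + 1) i) + q powi A * (\<Sum>i\<in>{0..B}. chu_term A B c i)"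
proof -
  have "(\<Sum>i\<in>{0..B + 1}. chu_term (A - 1) B (c + 1) (i - 1))
      = (\<Sum>i\<in>{-1..B}. chu_term (A - 1) B (c + 1) i)"
    by (rule sum.reindex_bij_witness[of _ "\<lambda>i. i + 1" "\<lambda>i. i - 1"]) auto
  also have "\<dots> = (\<Sum>i\<in>{0..B}. chu_term (A - 1) B (c + 1) i)"
    by (rule sum.mono_neutral_right) (auto simp: chu_term_def rpoch_neg)
  finally have shifted: "(\<Sum>i\<in>{0..B + 1}. chu_term (A - 1) B (c + 1) (i - 1))
      = (\<Sum>i\<in>{0..B}. chu_term (A - 1) B (c + 1) i)" .
  have top: "(\<Sum>i\<in>{0..B + 1}. chu_term A B c i) = (\<Sum>i\<in>{0..B}. chu_term A B c i)"
    by (rule sum.mono_neutral_right) (auto simp: chu_term_def rpoch_neg)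
  show ?thesis
    unfolding sum_distrib_left chu_term_pascal sum.distrib shifted
    by (simp add: top sum_distrib_left[symmetric])
qed

lemma chu_closed_form_rec:
  assumes "0 \<le> B" "0 \<le> c"
  shows "(1 - q powi (B + 1))
      * (poch (A + B + c + 1) * rpoch A * rpoch (B + 1) * rpoch (A + c) * rpoch (B + c + 1))
    = poch (A + B + c) * rpoch (A - 1) * rpoch B * rpoch (A + c) * rpoch (B + c + 1)
      + q powi A * (poch (A + B + c) * rpoch A * rpoch B * rpoch (A + c) * rpoch (B + c))"
proof (cases "0 \<le> A")
  case True
  have "poch (A + B + c + 1) = poch (A + B + c) * (1 - q powi A * q powi (B + c + 1))"
    using poch_succ[of "A + B + c"] True assms q_powi_add[of A "B + c + 1"] by (simp add: add.assoc)
  then show ?thesis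
    unfolding rpoch_succ[of B] rpoch_pred[of A] rpoch_succ[of "B + c"] by algebra
next
  case False
  then show ?thesis by (simp add: rpoch_neg)
qed

theorem q_chu_vandermonde:
  assumes "0 \<le> c"
  shows "(\<Sum>i\<in>{0..B}. chu_term A B c i)
    = poch (A + B + c) * rpoch A * rpoch B * rpoch (A + c) * rpoch (B + c)"
proof (cases "0 \<le> B")
  case False
  then show ?thesis by (simp add: rpoch_neg)
next
  case True
  then obtain b where b: "B = int b"
    by (metis nonneg_eq_int)
  have "(\<Sum>i\<in>{0..int b}. chu_term A (int b) c i)
    = poch (A + int b + c) * rpoch A * rpoch (int b) * rpoch (A + c) * rpoch (int b + c)"
    if "0 \<le> c" for A c
    using that
  proof (induction b arbitrary: A c)
    case 0
    then show ?case
      by (cases "0 \<le> A") (simp_all add: chu_term_def rpoch_neg poch_mult_rpoch)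
  next
    case (Suc b)
    have "(1 - q powi (int b + 1)) * (\<Sum>i\<in>{0..int b + 1}. chu_term A (int b + 1) c i)
      = (1 - q powi (int b + 1)) * (poch (A + int b + c + 1) * rpoch A * rpoch (int b + 1)
          * rpoch (A + c) * rpoch (int b + c + 1))"
      unfolding chu_sum_rec chu_closed_form_rec[OF of_nat_0_le_iff Suc.prems]
      using Suc.IH[of "c + 1" "A - 1"] Suc.IH[of c A] Suc.prems by (simp add: algebra_simps)
    then have "(\<Sum>i\<in>{0..int b + 1}. chu_term A (int b + 1) c i)
      = poch (A + int b + c + 1) * rpoch A * rpoch (int b + 1)
        * rpoch (A + c) * rpoch (int b + c + 1)"
      using one_minus_q_powi_nonzero[of "int b + 1"] by simp
    then show ?case
      by (simp add: ac_simps)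
  qed
  then show ?thesis
    using assms b by blast
qed

lemma q_chu_vandermonde_reversed:
  assumes "0 \<le> c"
  shows "(\<Sum>i\<in>{0..B}. q powi (i * (i + c)) * rpoch i * rpoch (A - i) * rpoch (B - i) * rpoch (c + i))
    = poch (A + B + c) * rpoch A * rpoch B * rpoch (A + c) * rpoch (B + c)"
    (is "?S A B = ?P A B")
proof -
  have ordered: "?S A B = ?P A B" if "B \<le> A" for A B
  proof -
    have "?S A B = (\<Sum>i\<in>{0..B}. chu_term (B + c) B (A - B) i)"
      by (subst sum_int_reflect[symmetric]) (simp add: chu_term_def algebra_simps)
    also have "\<dots> = ?P A B"
      using q_chu_vandermonde[of "A - B" "B + c" B] that by (simp add: algebra_simps)
    finally show ?thesis .
  qed
  consider "B \<le> A" | "A < 0" | "0 \<le> A" "A < B"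
    by linarith
  then show ?thesis
  proof cases
    case 1
    then show ?thesis by (rule ordered)
  next
    case 2
    then show ?thesis by (simp add: rpoch_neg)
  next
    case 3
    have "?S A B
        = (\<Sum>i\<in>{0..A}. q powi (i * (i + c)) * rpoch i * rpoch (A - i) * rpoch (B - i) * rpoch (c + i))"
      by (rule sum.mono_neutral_right) (use 3 in \<open>auto simp: rpoch_neg\<close>)
    also have "\<dots> = ?S B A"
      by (simp add: ac_simps)
    also have "\<dots> = ?P B A"
      using 3 by (intro ordered) simp
    also have "\<dots> = ?P A B"
      by (simp add: ac_simps)
    finally show ?thesis .
  qed
qed

definition rpair :: "int \<Rightarrow> int \<Rightarrow> int \<Rightarrow> complex" where
  "rpair e x k = rpoch (x - k) * rpoch (x + k + e)"

lemma rpair_reflect: "rpair e x (- e - k) = rpair e x k"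
  by (simp add: rpair_def algebra_simps)

lemma rpair_eq_0: "x < k \<or> x + k + e < 0 \<Longrightarrow> rpair e x k = 0"
  by (auto simp: rpair_def rpoch_neg)

lemma rpair_succ:
  "(1 - q powi (x + k + 1 + e)) * rpair e x (k + 1) = (1 - q powi (x - k)) * rpair e x k"
proof -
  have lower: "rpoch (x - (k + 1)) = (1 - q powi (x - k)) * rpoch (x - k)"
    using rpoch_pred[of "x - k"] by (simp add: algebra_simps)
  have upper: "(1 - q powi (x + k + 1 + e)) * rpoch (x + (k + 1) + e) = rpoch (x + k + e)"
    using rpoch_pred[of "x + k + 1 + e"] by (simp add: algebra_simps)
  have "(1 - q powi (x + k + 1 + e)) * rpair e x (k + 1)
      = rpoch (x - (k + 1)) * ((1 - q powi (x + k + 1 + e)) * rpoch (x + (k + 1) + e))"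
    by (simp add: rpair_def ac_simps)
  also have "\<dots> = (1 - q powi (x - k)) * rpair e x k"
    unfolding lower upper by (simp add: rpair_def)
  finally show ?thesis .
qed

lemma rpair_lower:
  "rpair e x k = (1 - q powi (x + 1 - k)) * (1 - q powi (x + 1 + k + e)) * rpair e (x + 1) k"
proof -
  have lower: "rpoch (x - k) = (1 - q powi (x + 1 - k)) * rpoch (x + 1 - k)"
    using rpoch_succ[of "x - k"] by (simp add: algebra_simps)
  have upper: "rpoch (x + k + e) = (1 - q powi (x + 1 + k + e)) * rpoch (x + 1 + k + e)"
    using rpoch_succ[of "x + k + e"] by (simp add: algebra_simps)
  show ?thesis
    unfolding rpair_def lower upper by (simp add: ac_simps)
qed

lemma poch_rpair_expansion:
  assumes "0 \<le> l" "0 \<le> m" "0 \<le> k" "0 \<le> 2 * k + e"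
  shows "poch (l + m + e) * rpair e l k * rpair e m k
    = (\<Sum>s\<in>{0..l}. q powi ((l - s) * (m - s)) * rpoch (l - s) * rpoch (m - s) * rpair e s k)"
    (is "_ = (\<Sum>s\<in>_. ?f s)")
proof -
  have "(\<Sum>s\<in>{0..l}. ?f s) = (\<Sum>i\<in>{-k..l-k}. ?f (i + k))"
    by (rule sum.reindex_bij_witness[of _ "\<lambda>i. i + k" "\<lambda>s. s - k"]) auto
  also have "\<dots> = (\<Sum>i\<in>{-k..l+m}. ?f (i + k))"
    by (rule sum.mono_neutral_left) (use assms in \<open>auto simp: rpoch_neg\<close>)
  also have "\<dots> = (\<Sum>i\<in>{0..m-k}. ?f (i + k))"
    by (rule sum.mono_neutral_right) (use assms in \<open>auto simp: rpair_def rpoch_neg\<close>)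
  also have "\<dots> = (\<Sum>i\<in>{0..m-k}. chu_term (l - k) (m - k) (2 * k + e) i)"
    by (simp add: chu_term_def rpair_def algebra_simps)
  also have "\<dots> = poch (l + m + e) * rpair e l k * rpair e m k"
    using q_chu_vandermonde[OF assms(4), of "l - k" "m - k"] by (simp add: rpair_def algebra_simps)
  finally show ?thesis ..
qed

(* For e in {0, 1} the reflection k to -e-k maps every negative k to a nonnegative one. *)
lemma poch_rpair_expansion_parity:
  assumes "e \<in> {0, 1}" "0 \<le> l" "0 \<le> m"
  shows "poch (l + m + e) * rpair e l k * rpair e m k
    = (\<Sum>s\<in>{0..l}. q powi ((l - s) * (m - s)) * rpoch (l - s) * rpoch (m - s) * rpair e s k)"
proof (cases "0 \<le> k")
  case True
  then show ?thesis
    using assms by (intro poch_rpair_expansion) auto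
next
  case False
  then have "poch (l + m + e) * rpair e l (- e - k) * rpair e m (- e - k)
    = (\<Sum>s\<in>{0..l}. q powi ((l - s) * (m - s)) * rpoch (l - s) * rpoch (m - s)
        * rpair e s (- e - k))"
    using assms by (intro poch_rpair_expansion) auto
  then show ?thesis
    by (simp add: rpair_reflect)
qed

(* This is poch_rpair_expansion at k = j with parity parameter n + e - j. *)
lemma poch_quotient_expansion:
  assumes "0 \<le> l" "0 \<le> m" "0 \<le> j" "0 \<le> n + e"
  shows "poch (l + m + n - j + e) * rpoch (l - j) * rpoch (m - j)
    = poch (l + n + e) * poch (m + n + e)
      * (\<Sum>s\<in>{0..l}. q powi ((l - s) * (m - s)) * rpoch (l - s) * rpoch (m - s)
          * rpoch (s - j) * rpoch (s + n + e))"
proof -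
  have cancel: "poch (l + n + e) * poch (m + n + e) * (Y * rpoch (l + n + e) * rpoch (m + n + e)) = Y"
    for Y
  proof -
    have "poch (l + n + e) * poch (m + n + e) * (Y * rpoch (l + n + e) * rpoch (m + n + e))
        = Y * (poch (l + n + e) * rpoch (l + n + e)) * (poch (m + n + e) * rpoch (m + n + e))"
      by (simp only: ac_simps)
    then show ?thesis
      using poch_mult_rpoch[of "l + n + e"] poch_mult_rpoch[of "m + n + e"] assms by simp
  qed
  have "(\<Sum>s\<in>{0..l}. q powi ((l - s) * (m - s)) * rpoch (l - s) * rpoch (m - s)
        * rpoch (s - j) * rpoch (s + n + e))
      = poch (l + m + n - j + e) * rpoch (l - j) * rpoch (m - j)
        * rpoch (l + n + e) * rpoch (m + n + e)"
    using poch_rpair_expansion[of l m j "n + e - j"] assms by (simp add: rpair_def algebra_simps)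
  then show ?thesis
    by (simp add: cancel)
qed

end

section \<open>The q-Dixon sum\<close>

lemma dixon_wz_identity:
  fixes x y q \<alpha> \<beta> \<gamma> T :: "'a::idom"
  assumes "x * y = 1" "d \<le> 1"
  defines "t \<equiv> q ^ d" and "s \<equiv> 1 + (-1) ^ d * q ^ d * x ^ (d + 1)"
  shows "(1 - \<alpha>) * (1 - \<alpha> * \<beta> * t) * (1 - \<alpha> * \<gamma> * t) * (s * T)
    = (1 - \<alpha> * \<beta> * \<gamma> * t) * (s * ((1 - \<alpha> * y) * (1 - \<alpha> * t * x) * T))
      + (\<alpha> * t * x^2 * (1 - q * x) ^ d * (1 - \<alpha> * y) * (1 - \<beta> * y) * (1 - \<gamma> * y) * T
        - - (\<alpha> * y) * (1 - x) ^ d * (1 - \<alpha> * t * x) * (1 - \<beta> * t * x) * (1 - \<gamma> * t * x) * T)"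
proof -
  consider "d = 0" | "d = 1"
    using assms(2) by linarith
  then show ?thesis
  proof cases
    case 1
    show ?thesis
      using assms(1) unfolding s_def t_def 1 by simp algebra
  next
    case 2
    show ?thesis
      using assms(1) unfolding s_def t_def 2 power_one_right one_add_one by algebra
  qed
qed

context q_generic
begin

definition pent_weight :: "int \<Rightarrow> int \<Rightarrow> complex" where
  "pent_weight e k = (-1) powi k * q powi ((3 * k^2 + (2 * e - 1) * k) div 2)"

lemma pent_weight_succ: "pent_weight e (k + 1) = - (q powi (3 * k + 1 + e)) * pent_weight e k"
proof -
  have "3 * (k + 1)^2 + (2 * e - 1) * (k + 1) = (3 * k^2 + (2 * e - 1) * k) + (3 * k + 1 + e) * 2"
    by (simp add: power2_eq_square algebra_simps)
  then have "(3 * (k + 1)^2 + (2 * e - 1) * (k + 1)) div 2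
      = (3 * k^2 + (2 * e - 1) * k) div 2 + (3 * k + 1 + e)"
    by simp
  then show ?thesis
    by (simp add: pent_weight_def q_powi_add power_int_add_1)
qed

lemma pent_weight_reflect:
  assumes "e \<in> {0, 1}"
  shows "pent_weight e (- e - k) = (-1) powi e * q powi ((e + 1) * k + e) * pent_weight e k"
proof -
  have "3 * (- e - k)^2 + (2 * e - 1) * (- e - k)
      = (3 * k^2 + (2 * e - 1) * k) + ((e + 1) * k + e) * 2"
    using assms by (auto simp: power2_eq_square algebra_simps)
  then have "(3 * (- e - k)^2 + (2 * e - 1) * (- e - k)) div 2
      = (3 * k^2 + (2 * e - 1) * k) div 2 + ((e + 1) * k + e)"
    by simp
  moreover have "(-1::complex) powi (- e - k) = (-1) powi e * (-1) powi k"
    using power_int_minus_one_minus[of "e + k"] by (simp add: power_int_add)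
  ultimately show ?thesis
    by (simp add: pent_weight_def q_powi_add)
qed

definition dixon_term :: "int \<Rightarrow> int \<Rightarrow> int \<Rightarrow> int \<Rightarrow> int \<Rightarrow> complex" where
  "dixon_term e a b c k = pent_weight e k * rpair e a k * rpair e b k * rpair e c k"

definition dixon_rhs :: "int \<Rightarrow> int \<Rightarrow> int \<Rightarrow> int \<Rightarrow> complex" where
  "dixon_rhs e a b c = poch (a + b + c + e) * rpoch a * rpoch b * rpoch c
     * rpoch (a + b + e) * rpoch (b + c + e) * rpoch (a + c + e)"

(* dixon_cert is a WZ certificate for the symmetrised summand dixon_sym e k * dixon_term e a b c k,
   whose sum is twice the q-Dixon sum (dixon_sym_sum). *)
definition dixon_sym :: "int \<Rightarrow> int \<Rightarrow> complex" where
  "dixon_sym e k = 1 + (-1) powi e * q powi ((e + 1) * k + e)"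

definition dixon_cert :: "int \<Rightarrow> int \<Rightarrow> int \<Rightarrow> int \<Rightarrow> int \<Rightarrow> complex" where
  "dixon_cert e a b c k = - (q powi (a + 1 - k)) * (1 - q powi k) powi e
     * (1 - q powi (a + 1 + k + e)) * (1 - q powi (b + k + e)) * (1 - q powi (c + k + e))
     * dixon_term e (a + 1) b c k"

lemma dixon_sym_of_nat: "dixon_sym (int d) k = 1 + (-1) ^ d * q ^ d * (q powi k) ^ (d + 1)"
proof -
  have "(int d + 1) * k + int d = k * int (d + 1) + int d"
    by (simp add: algebra_simps)
  then have "q powi ((int d + 1) * k + int d) = (q powi k) ^ (d + 1) * q ^ d"
    by (simp only: q_powi_add power_int_mult power_int_of_nat)
  then show ?thesis
    by (simp add: dixon_sym_def)
qed

lemma dixon_term_reflect: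
  assumes "e \<in> {0, 1}"
  shows "dixon_term e a b c (- e - k) = (dixon_sym e k - 1) * dixon_term e a b c k"
  using pent_weight_reflect[OF assms] by (simp add: dixon_term_def dixon_sym_def rpair_reflect)

lemma dixon_sym_sum:
  assumes "e \<in> {0, 1}"
  shows "(\<Sum>k\<in>{-M-e..M}. dixon_sym e k * dixon_term e a b c k)
    = 2 * (\<Sum>k\<in>{-M-e..M}. dixon_term e a b c k)"
proof -
  have reflected: "(\<Sum>k\<in>{-M-e..M}. dixon_term e a b c (- e - k))
      = (\<Sum>k\<in>{-M-e..M}. dixon_term e a b c k)"
    using sum_int_reflect[of "dixon_term e a b c" "-M-e" M] by simp
  have "(\<Sum>k\<in>{-M-e..M}. dixon_sym e k * dixon_term e a b c k)
      = (\<Sum>k\<in>{-M-e..M}. dixon_term e a b c k + dixon_term e a b c (- e - k))"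
    by (rule sum.cong) (simp_all add: dixon_term_reflect[OF assms] algebra_simps)
  also have "\<dots> = 2 * (\<Sum>k\<in>{-M-e..M}. dixon_term e a b c k)"
    unfolding sum.distrib reflected by simp
  finally show ?thesis .
qed

lemma dixon_rhs_succ:
  assumes "0 \<le> a" "0 \<le> b" "0 \<le> c" "0 \<le> e"
  shows "(1 - q powi (a + 1)) * (1 - q powi (a + b + 1 + e)) * (1 - q powi (a + c + 1 + e))
      * dixon_rhs e (a + 1) b c
    = (1 - q powi (a + b + c + 1 + e)) * dixon_rhs e a b c"
proof -
  have "poch (a + 1 + b + c + e) = poch (a + b + c + e) * (1 - q powi (a + b + c + 1 + e))"
    using poch_succ[of "a + b + c + e"] assms by (simp add: ac_simps)
  then show ?thesis
    unfolding dixon_rhs_def rpoch_succ[of a] rpoch_succ[of "a + b + e"] rpoch_succ[of "a + c + e"]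
    by (simp add: ac_simps)
qed

lemma dixon_cert_succ:
  "dixon_cert e a b c (k + 1) = q powi (a + 1 + 2 * k + e) * (1 - q powi (k + 1)) powi e
     * (1 - q powi (a + 1 - k)) * (1 - q powi (b - k)) * (1 - q powi (c - k))
     * dixon_term e (a + 1) b c k"
proof -
  have shift: "(1 - q powi (x + (k + 1) + e)) * rpair e x (k + 1)
      = (1 - q powi (x - k)) * rpair e x k" for x
    using rpair_succ[of x k e] by (simp add: ac_simps)
  have weight: "- (q powi (a + 1 - (k + 1))) * pent_weight e (k + 1)
      = q powi (a + 1 + 2 * k + e) * pent_weight e k"
    unfolding pent_weight_succ by (simp flip: q_powi_add) (simp add: algebra_simps)
  have "dixon_cert e a b c (k + 1)
      = (- (q powi (a + 1 - (k + 1))) * pent_weight e (k + 1)) * (1 - q powi (k + 1)) powi e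
        * ((1 - q powi (a + 1 + (k + 1) + e)) * rpair e (a + 1) (k + 1))
        * ((1 - q powi (b + (k + 1) + e)) * rpair e b (k + 1))
        * ((1 - q powi (c + (k + 1) + e)) * rpair e c (k + 1))"
    by (simp add: dixon_cert_def dixon_term_def ac_simps)
  also have "\<dots> = q powi (a + 1 + 2 * k + e) * (1 - q powi (k + 1)) powi e
     * (1 - q powi (a + 1 - k)) * (1 - q powi (b - k)) * (1 - q powi (c - k))
     * dixon_term e (a + 1) b c k"
    unfolding weight shift by (simp add: dixon_term_def ac_simps)
  finally show ?thesis .
qed

lemma dixon_wz_step:
  assumes "e \<in> {0, 1}"
  shows "(1 - q powi (a + 1)) * (1 - q powi (a + b + 1 + e)) * (1 - q powi (a + c + 1 + e))
      * (dixon_sym e k * dixon_term e (a + 1) b c k)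
    = (1 - q powi (a + b + c + 1 + e)) * (dixon_sym e k * dixon_term e a b c k)
      + (dixon_cert e a b c (k + 1) - dixon_cert e a b c k)"
proof -
  obtain d :: nat where d: "e = int d" "d \<le> 1"
    using assms by auto
  define x y \<alpha> \<beta> \<gamma> t T where "x = q powi k" and "y = q powi (- k)" and "\<alpha> = q powi (a + 1)"
    and "\<beta> = q powi b" and "\<gamma> = q powi c" and "t = q powi e"
    and "T = dixon_term e (a + 1) b c k"
  note defs = x_def y_def \<alpha>_def \<beta>_def \<gamma>_def t_def
  have xy: "x * y = 1"
    unfolding defs using q_nonzero by (simp flip: q_powi_add)
  have powers:
    "q powi (a + 1 - k) = \<alpha> * y" "q powi (a + 1 + k + e) = \<alpha> * t * x"
    "q powi (b + k + e) = \<beta> * t * x" "q powi (c + k + e) = \<gamma> * t * x"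
    "q powi (b - k) = \<beta> * y" "q powi (c - k) = \<gamma> * y"
    "q powi (a + 1 + 2 * k + e) = \<alpha> * t * x^2"
    "q powi (a + b + 1 + e) = \<alpha> * \<beta> * t" "q powi (a + c + 1 + e) = \<alpha> * \<gamma> * t"
    "q powi (a + b + c + 1 + e) = \<alpha> * \<beta> * \<gamma> * t"
    unfolding defs power2_eq_square by (simp_all flip: q_powi_add add: algebra_simps)
  have power_succ: "q powi (k + 1) = q * x"
    unfolding x_def using q_nonzero by (simp add: power_int_add_1')
  have lower: "dixon_term e a b c k = (1 - \<alpha> * y) * (1 - \<alpha> * t * x) * T"
    unfolding T_def dixon_term_def rpair_lower[of e a k] powers by (simp add: ac_simps)
  have cert_succ: "dixon_cert e a b c (k + 1)
      = \<alpha> * t * x^2 * (1 - q * x) powi e * (1 - \<alpha> * y) * (1 - \<beta> * y) * (1 - \<gamma> * y) * T"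
    unfolding dixon_cert_succ powers power_succ T_def ..
  have cert: "dixon_cert e a b c k
      = - (\<alpha> * y) * (1 - x) powi e * (1 - \<alpha> * t * x) * (1 - \<beta> * t * x) * (1 - \<gamma> * t * x) * T"
    unfolding dixon_cert_def powers T_def x_def ..
  have t: "t = q ^ d"
    and powi_e: "(1 - q * x) powi e = (1 - q * x) ^ d" "(1 - x) powi e = (1 - x) ^ d"
    by (simp_all add: t_def d)
  have sym: "dixon_sym e k = 1 + (-1) ^ d * q ^ d * x ^ (d + 1)"
    unfolding d(1) x_def by (rule dixon_sym_of_nat)
  show ?thesis
    unfolding lower cert_succ cert powers T_def[symmetric] \<alpha>_def[symmetric] sym t powi_e
    by (rule dixon_wz_identity[OF xy d(2)])
qed

lemma dixon_cert_vanishes: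
  assumes "a < M"
  shows "dixon_cert e a b c (M + 1) = 0" and "dixon_cert e a b c (- M - e) = 0"
proof -
  show "dixon_cert e a b c (M + 1) = 0"
    using assms by (simp add: dixon_cert_def dixon_term_def rpair_eq_0)
  show "dixon_cert e a b c (- M - e) = 0"
    by (cases "a + 1 = M") (use assms in \<open>simp_all add: dixon_cert_def dixon_term_def rpair_eq_0\<close>)
qed

lemma dixon_sym_initial:
  assumes "e \<in> {0, 1}" "0 \<le> b" "0 \<le> c" "0 \<le> M"
  shows "(\<Sum>k\<in>{-M-e..M}. dixon_sym e k * dixon_term e 0 b c k) = 2 * dixon_rhs e 0 b c"
proof -
  define R where "R = rpoch b * rpoch (b + e) * rpoch c * rpoch (c + e)"
  have "dixon_rhs e 0 b c = (poch (b + c + e) * rpoch (b + c + e)) * R"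
    by (simp add: dixon_rhs_def R_def ac_simps)
  then have rhs: "dixon_rhs e 0 b c = R"
    using poch_mult_rpoch[of "b + c + e"] assms by auto
  have "(\<Sum>k\<in>{-M-e..M}. dixon_sym e k * dixon_term e 0 b c k)
      = (\<Sum>k\<in>{-e..0}. dixon_sym e k * dixon_term e 0 b c k)"
  proof (rule sum.mono_neutral_right)
    show "\<forall>k\<in>{-M-e..M} - {-e..0}. dixon_sym e k * dixon_term e 0 b c k = 0"
      by (auto simp: dixon_term_def rpair_eq_0)
  qed (use assms in auto)
  also have "\<dots> = 2 * R"
  proof (cases "e = 0")
    case True
    then show ?thesis
      by (simp add: dixon_sym_def dixon_term_def pent_weight_def rpair_def R_def ac_simps)
  next
    case False
    with assms have "e = 1" by simp
    have "{-1..0::int} = {-1, 0}"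
      by auto
    then have "(\<Sum>k\<in>{-e..0}. dixon_sym e k * dixon_term e 0 b c k)
        = ((1 - q) + (1 - q powi (-1)) * (-q)) * rpoch 1 * R"
      using \<open>e = 1\<close>
      by (simp add: dixon_sym_def dixon_term_def pent_weight_def rpair_def R_def algebra_simps)
    also have "\<dots> = 2 * ((1 - q) * rpoch 1) * R"
      using q_nonzero by (simp add: field_simps)
    also have "(1 - q) * rpoch 1 = 1"
      using rpoch_pred[of 1] by simp
    finally show ?thesis
      by simp
  qed
  finally show ?thesis
    unfolding rhs .
qed

theorem q_dixon:
  assumes "e \<in> {0, 1}" "0 \<le> a" "0 \<le> b" "0 \<le> c" "a \<le> M"
  shows "(\<Sum>k\<in>{-M-e..M}. dixon_term e a b c k) = dixon_rhs e a b c"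
proof -
  let ?D = "\<lambda>a. (1 - q powi (a + 1)) * (1 - q powi (a + b + 1 + e)) * (1 - q powi (a + c + 1 + e))"
  let ?N = "\<lambda>a. 1 - q powi (a + b + c + 1 + e)"
  have "(\<Sum>k\<in>{-M-e..M}. dixon_sym e k * dixon_term e a b c k) = 2 * dixon_rhs e a b c"
  proof (rule wz_sum_induct[where f = "\<lambda>a k. dixon_sym e k * dixon_term e a b c k"
        and Z = "\<lambda>a. 2 * dixon_rhs e a b c" and D = ?D and N = ?N
        and G = "\<lambda>a. dixon_cert e a b c" and M = M])
    fix a' k
    show "?D a' * (dixon_sym e k * dixon_term e (a' + 1) b c k)
      = ?N a' * (dixon_sym e k * dixon_term e a' b c k)
        + (dixon_cert e a' b c (k + 1) - dixon_cert e a' b c k)"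
      by (rule dixon_wz_step[OF assms(1)])
  next
    fix a' assume "0 \<le> a'" "a' < M"
    then show "dixon_cert e a' b c (- M - e) = 0 \<and> dixon_cert e a' b c (M + 1) = 0"
      by (simp add: dixon_cert_vanishes)
    have "0 \<le> e"
      using assms(1) by auto
    then have "?D a' * dixon_rhs e (a' + 1) b c = ?N a' * dixon_rhs e a' b c"
      using dixon_rhs_succ \<open>0 \<le> a'\<close> assms by blast
    moreover have "?D a' \<noteq> 0"
      using one_minus_q_powi_nonzero \<open>0 \<le> e\<close> \<open>0 \<le> a'\<close> assms by simp
    ultimately show "?D a' * (2 * dixon_rhs e (a' + 1) b c) = ?N a' * (2 * dixon_rhs e a' b c)
      \<and> ?D a' \<noteq> 0"
      by (metis mult.left_commute)
  qed (use assms dixon_sym_initial in auto)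
  then show ?thesis
    using dixon_sym_sum[OF assms(1)] by simp
qed

section \<open>Reduction of both sides to a common sum\<close>

lemma q_identity_lhs_expansion:
  assumes "0 \<le> l" "0 \<le> m" "0 \<le> n" "0 \<le> u" "0 \<le> e"
  shows "(\<Sum>j\<in>{0..n}. q powi (j * (j + u + e)) * poch (l + m + n - j + e)
      * rpoch j * rpoch (l - j) * rpoch (m - j) * rpoch (n - j) * rpoch (u + j + e))
    = poch (l + n + e) * poch (m + n + e) * poch u
      * (\<Sum>s\<in>{0..l}. q powi ((l - s) * (m - s)) * rpoch (l - s) * rpoch (m - s) * dixon_rhs e n s u)"
proof -
  define w where "w s = q powi ((l - s) * (m - s)) * rpoch (l - s) * rpoch (m - s)" for s
  define P where "P = poch (l + n + e) * poch (m + n + e)"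
  have "(\<Sum>j\<in>{0..n}. q powi (j * (j + u + e)) * poch (l + m + n - j + e)
      * rpoch j * rpoch (l - j) * rpoch (m - j) * rpoch (n - j) * rpoch (u + j + e))
    = (\<Sum>j\<in>{0..n}. q powi (j * (j + u + e)) * rpoch j * rpoch (n - j) * rpoch (u + j + e)
      * (poch (l + m + n - j + e) * rpoch (l - j) * rpoch (m - j)))"
    by (rule sum.cong) (simp_all add: ac_simps)
  also have "\<dots> = (\<Sum>j\<in>{0..n}. q powi (j * (j + u + e)) * rpoch j * rpoch (n - j) * rpoch (u + j + e)
      * (P * (\<Sum>s\<in>{0..l}. w s * rpoch (s - j) * rpoch (s + n + e))))"
    by (rule sum.cong) (use assms in \<open>simp_all add: poch_quotient_expansion P_def w_def\<close>)
  also have "\<dots> = P * (\<Sum>s\<in>{0..l}. w s * rpoch (s + n + e)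
      * (\<Sum>j\<in>{0..n}. q powi (j * (j + (u + e))) * rpoch j * rpoch (s - j) * rpoch (n - j)
          * rpoch ((u + e) + j)))"
    by (simp add: sum_distrib_left sum.swap[of _ "{0..n}"] ac_simps)
  also have "\<dots> = P * (\<Sum>s\<in>{0..l}. w s * rpoch (s + n + e)
      * (poch (s + n + (u + e)) * rpoch s * rpoch n * rpoch (s + (u + e)) * rpoch (n + (u + e))))"
    using q_chu_vandermonde_reversed[of "u + e"] assms by simp
  also have "\<dots> = P * (\<Sum>s\<in>{0..l}. w s * (poch u * dixon_rhs e n s u))"
  proof -
    have "poch u * dixon_rhs e n s u = (poch u * rpoch u) * (rpoch (s + n + e)
        * (poch (s + n + (u + e)) * rpoch s * rpoch n * rpoch (s + (u + e)) * rpoch (n + (u + e))))"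
      for s
      by (simp add: dixon_rhs_def ac_simps)
    then show ?thesis
      using poch_mult_rpoch[of u] assms by (simp add: mult.assoc)
  qed
  finally show ?thesis
    by (simp add: P_def w_def sum_distrib_left ac_simps)
qed

lemma q_identity_rhs_expansion:
  assumes "e \<in> {0, 1}" "0 \<le> l" "0 \<le> m" "0 \<le> n" "0 \<le> u"
  shows "(\<Sum>k\<in>{-n-e..n}. pent_weight e k
      * poch (l + m + e) * poch (m + n + e) * poch (l + n + e) * poch u
      * rpoch (l - k) * rpoch (m - k) * rpoch (n - k) * rpoch (u - k)
      * rpoch (l + k + e) * rpoch (m + k + e) * rpoch (n + k + e) * rpoch (u + k + e))
    = poch (l + n + e) * poch (m + n + e) * poch u
      * (\<Sum>s\<in>{0..l}. q powi ((l - s) * (m - s)) * rpoch (l - s) * rpoch (m - s) * dixon_rhs e n s u)"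
proof -
  define w where "w s = q powi ((l - s) * (m - s)) * rpoch (l - s) * rpoch (m - s)" for s
  define P where "P = poch (l + n + e) * poch (m + n + e) * poch u"
  have "(\<Sum>k\<in>{-n-e..n}. pent_weight e k
      * poch (l + m + e) * poch (m + n + e) * poch (l + n + e) * poch u
      * rpoch (l - k) * rpoch (m - k) * rpoch (n - k) * rpoch (u - k)
      * rpoch (l + k + e) * rpoch (m + k + e) * rpoch (n + k + e) * rpoch (u + k + e))
    = (\<Sum>k\<in>{-n-e..n}. P * (pent_weight e k * (poch (l + m + e) * rpair e l k * rpair e m k)
        * rpair e n k * rpair e u k))"
    by (rule sum.cong) (simp_all add: P_def rpair_def ac_simps)
  also have "\<dots> = (\<Sum>k\<in>{-n-e..n}. P * (pent_weight e k * (\<Sum>s\<in>{0..l}. w s * rpair e s k)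
        * rpair e n k * rpair e u k))"
    using poch_rpair_expansion_parity assms by (simp add: w_def)
  also have "\<dots> = P * (\<Sum>s\<in>{0..l}. w s * (\<Sum>k\<in>{-n-e..n}. dixon_term e n s u k))"
    by (simp add: dixon_term_def sum_distrib_left sum_distrib_right sum.swap[of _ "{-n-e..n}"]
        ac_simps)
  also have "\<dots> = P * (\<Sum>s\<in>{0..l}. w s * dixon_rhs e n s u)"
    using q_dixon[OF assms(1) assms(4) _ assms(5) order_refl] by simp
  finally show ?thesis
    by (simp add: P_def w_def)
qed

theorem q_identity_parity:
  assumes "e \<in> {0, 1}" "0 \<le> l" "0 \<le> m" "0 \<le> n" "0 \<le> u"
  shows "(\<Sum>j\<in>{0..n}. q powi (j * (j + u + e)) * poch (l + m + n - j + e)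
      * rpoch j * rpoch (l - j) * rpoch (m - j) * rpoch (n - j) * rpoch (u + j + e))
    = (\<Sum>k\<in>{-n-e..n}. pent_weight e k
      * poch (l + m + e) * poch (m + n + e) * poch (l + n + e) * poch u
      * rpoch (l - k) * rpoch (m - k) * rpoch (n - k) * rpoch (u - k)
      * rpoch (l + k + e) * rpoch (m + k + e) * rpoch (n + k + e) * rpoch (u + k + e))"
proof -
  have "0 \<le> e"
    using assms(1) by auto
  show ?thesis
    unfolding q_identity_lhs_expansion[OF assms(2-5) \<open>0 \<le> e\<close>] q_identity_rhs_expansion[OF assms] ..
qed

lemma q_identity_parity_nat:
  assumes "c \<le> 1"
  shows "(\<Sum>k=0..n. q ^ (k^2 + (u + c) * k) * qpoch q (l + m + n - k + c)
      * qinv q (int k) * qinv q (int l - int k) * qinv q (int m - int k)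
      * qinv q (int n - int k) * qinv q (int u + int k + int c))
    = (\<Sum>k=-int n-int c..int n. (-1) powi k * q powi ((3 * k^2 + (2 * int c - 1) * k) div 2)
      * qpoch q (l + m + c) * qpoch q (m + n + c) * qpoch q (l + n + c) * qpoch q u
      * qinv q (int l - k) * qinv q (int m - k) * qinv q (int n - k) * qinv q (int u - k)
      * qinv q (int l + k + int c) * qinv q (int m + k + int c) * qinv q (int n + k + int c)
      * qinv q (int u + k + int c))"
proof -
  have exponent: "q powi (int k * (int k + int u + int c)) = q ^ (k^2 + (u + c) * k)" for k
  proof -
    have "int k * (int k + int u + int c) = int (k^2 + (u + c) * k)"
      by (simp add: power2_eq_square algebra_simps)
    then show ?thesis
      by (simp only: power_int_of_nat)
  qed
  have "poch (int l + int m + int n - int k + int c) = qpoch q (l + m + n - k + c)"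
    if "k \<in> {0..n}" for k
  proof -
    have "int l + int m + int n - int k + int c = int (l + m + n - k + c)"
      using that by simp
    then show ?thesis
      by (simp only: poch_def nat_int)
  qed
  then have "(\<Sum>k=0..n. q ^ (k^2 + (u + c) * k) * qpoch q (l + m + n - k + c)
      * qinv q (int k) * qinv q (int l - int k) * qinv q (int m - int k)
      * qinv q (int n - int k) * qinv q (int u + int k + int c))
    = (\<Sum>k=0..n. q powi (int k * (int k + int u + int c))
      * poch (int l + int m + int n - int k + int c) * rpoch (int k) * rpoch (int l - int k)
      * rpoch (int m - int k) * rpoch (int n - int k) * rpoch (int u + int k + int c))"
    by (intro sum.cong) (simp_all add: exponent)
  also have "\<dots> = (\<Sum>j\<in>{0..int n}. q powi (j * (j + int u + int c))
      * poch (int l + int m + int n - j + int c) * rpoch j * rpoch (int l - j)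
      * rpoch (int m - j) * rpoch (int n - j) * rpoch (int u + j + int c))"
    by (simp only: sum.atLeast_int_atMost_int_shift[of _ 0 n, unfolded of_nat_0] o_def)
  also have "\<dots> = (\<Sum>k\<in>{-int n-int c..int n}. pent_weight (int c) k
      * poch (int l + int m + int c) * poch (int m + int n + int c) * poch (int l + int n + int c)
      * poch (int u) * rpoch (int l - k) * rpoch (int m - k) * rpoch (int n - k) * rpoch (int u - k)
      * rpoch (int l + k + int c) * rpoch (int m + k + int c) * rpoch (int n + k + int c)
      * rpoch (int u + k + int c))"
    using assms by (intro q_identity_parity) auto
  finally show ?thesis
    by (simp add: pent_weight_def poch_def flip: of_nat_add)
qed

end

lemma q_generic_if_norm_less_1:
  assumes "0 < norm q" "norm q < 1"
  shows "q_generic q"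
proof
  show "q \<noteq> 0"
    using assms(1) by auto
  show "q ^ n \<noteq> 1" if "0 < n" for n
  proof -
    have "norm (q ^ n) < 1"
      using that assms by (simp add: norm_power power_less_one_iff)
    then show ?thesis
      by auto
  qed
qed

theorem corollary5p5:
  fixes q :: complex and l m n u :: nat
  assumes "0 < norm q" and "norm q < 1"
  shows "((\<Sum>k=0..n. q ^ (k^2 + u*k) * qpoch q (l+m+n-k)
            * qinv q (int k) * qinv q (int l - int k) * qinv q (int m - int k)
            * qinv q (int n - int k) * qinv q (int u + int k))
       = (\<Sum>k=-int n..int n. (-1) powi k * q powi ((3*k^2 - k) div 2)
            * qpoch q (l+m) * qpoch q (m+n) * qpoch q (l+n) * qpoch q u
            * qinv q (int l - k) * qinv q (int m - k) * qinv q (int n - k) * qinv q (int u - k)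
            * qinv q (int l + k) * qinv q (int m + k) * qinv q (int n + k) * qinv q (int u + k)))
     \<and> ((\<Sum>k=0..n. q ^ (k^2 + (u+1)*k) * qpoch q (l+m+n-k+1)
            * qinv q (int k) * qinv q (int l - int k) * qinv q (int m - int k)
            * qinv q (int n - int k) * qinv q (int u + int k + 1))
       = (\<Sum>k=-int n-1..int n. (-1) powi k * q powi ((3*k^2 + k) div 2)
            * qpoch q (l+m+1) * qpoch q (m+n+1) * qpoch q (l+n+1) * qpoch q u
            * qinv q (int l - k) * qinv q (int m - k) * qinv q (int n - k) * qinv q (int u - k)
            * qinv q (int l + k + 1) * qinv q (int m + k + 1) * qinv q (int n + k + 1)
            * qinv q (int u + k + 1)))"
proof -
  interpret q_generic q
    using assms by (rule q_generic_if_norm_less_1)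
  show ?thesis
    using q_identity_parity_nat[where c = 0] q_identity_parity_nat[where c = 1] by simp
qed

end
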